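(* Let $D$ be a diagram of a link $L$, let $n\ge3$ be odd, and let $c_1,\dots,c_n\in MG(L)$ be conjugates of elements $a_1,\dots,a_n\in A(D)$ respectively. Then $c_1c_2^{-1}c_3c_4^{-1}\cdots c_{n-1}^{-1}c_n=c_nc_{n-1}^{-1}c_{n-2}\cdots c_2^{-1}c_1$.
   Context: Let $L$ be an oriented classical link with diagram $D$; $A(D)$ is the set of arcs of $D$. At a crossing, $a_1$ denotes the overpassing arc, $a_2$ the underpassing arc on the right of $a_1$ (with respect to the orientation of $a_1$), $a_3$ the underpassing arc on the left of $a_1$. The medial group $MG(L)$ is the group generated by $A(D)$ subject to the relations (i) $c_1c_2^{-1}c_3=c_3c_2^{-1}c_1$ whenever $c_1,c_2,c_3$ are conjugates of elements of $A(D)$, and (ii) $a_1a_2a_1^{-1}=a_3$ at every crossing of $D$. *)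

theory Defs
  imports "HOL-Algebra.Group"
begin

text \<open>A link diagram is represented by its arc type 'a (the set A(D) = UNIV) and its
crossings, each crossing given as a triple (a1, a2, a3): overpassing arc a1,
underpassing arc a2 on the right of a1, underpassing arc a3 on the left of a1.
Group words over A(D) are lists of letters (a, True) = a, (a, False) = a^-1.\<close>

type_synonym 'a word = "('a \<times> bool) list"

definition winv :: "'a word \<Rightarrow> 'a word" where
  "winv w = rev (map (\<lambda>(a, b). (a, \<not> b)) w)"

definition wconj :: "'a word \<Rightarrow> 'a \<Rightarrow> 'a word" where
  "wconj g a = g @ [(a, True)] @ winv g"

inductive mg_eq :: "('a \<times> 'a \<times> 'a) set \<Rightarrow> 'a word \<Rightarrow> 'a word \<Rightarrow> bool"
  for C :: "('a \<times> 'a \<times> 'a) set" where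
  mg_refl: "mg_eq C u u"
| mg_sym: "mg_eq C u v \<Longrightarrow> mg_eq C v u"
| mg_trans: "mg_eq C u v \<Longrightarrow> mg_eq C v w \<Longrightarrow> mg_eq C u w"
| mg_cong: "mg_eq C u v \<Longrightarrow> mg_eq C (p @ u @ q) (p @ v @ q)"
| mg_free: "mg_eq C [(a, b), (a, \<not> b)] []"
| mg_medial: "mg_eq C (wconj g1 x1 @ winv (wconj g2 x2) @ wconj g3 x3)
                     (wconj g3 x3 @ winv (wconj g2 x2) @ wconj g1 x1)"
| mg_cross: "(a1, a2, a3) \<in> C \<Longrightarrow> mg_eq C [(a1, True), (a2, True), (a1, False)] [(a3, True)]"

definition mg_class :: "('a \<times> 'a \<times> 'a) set \<Rightarrow> 'a word \<Rightarrow> 'a word set" where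
  "mg_class C w = {v. mg_eq C w v}"

definition medial_group :: "('a \<times> 'a \<times> 'a) set \<Rightarrow> 'a word set monoid" where
  "medial_group C = \<lparr> carrier = range (mg_class C),
     mult = (\<lambda>U V. \<Union>u\<in>U. \<Union>v\<in>V. mg_class C (u @ v)),
     one = mg_class C [] \<rparr>"

definition arc_gen :: "('a \<times> 'a \<times> 'a) set \<Rightarrow> 'a \<Rightarrow> 'a word set" where
  "arc_gen C a = mg_class C [(a, True)]"

definition alt_prod :: "('g, 'm) monoid_scheme \<Rightarrow> (nat \<Rightarrow> 'g) \<Rightarrow> nat list \<Rightarrow> 'g" where
  "alt_prod G c is = foldr (\<lambda>i acc. (if odd i then c i else inv\<^bsub>G\<^esub> (c i)) \<otimes>\<^bsub>G\<^esub> acc) is \<one>\<^bsub>G\<^esub>"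

end

theory Submission
  imports Defs
begin

text \<open>Relation (i) says that the set \<open>K\<close> of conjugates of arcs is medial:
  \<open>x y\<inverse> z = z y\<inverse> x\<close> on \<open>K\<close>. In any group, an alternating product of an odd number of
  elements of a medial set equals the reversed alternating product. Writing the list as
  \<open>x\<^sub>1 x\<^sub>2 ys z\<close>, the induction hypothesis for \<open>ys z\<close> exposes the factor \<open>x\<^sub>1 x\<^sub>2\<inverse> z\<close>,
  which the medial law turns into \<open>z x\<^sub>2\<inverse> x\<^sub>1\<close>; the induction hypothesis for \<open>x\<^sub>1 ys\<close> and
  for \<open>x\<^sub>2 ys\<close> then moves \<open>x\<^sub>1\<close> and \<open>x\<^sub>2\<close> past the reversed middle part. The sign of the
  first factor has to be kept general, since \<open>x\<^sub>2 ys\<close> starts with an inverse.\<close>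

definition signed :: "('g, 'm) monoid_scheme \<Rightarrow> bool \<Rightarrow> 'g \<Rightarrow> 'g" where
  "signed G b x = (if b then x else inv\<^bsub>G\<^esub> x)"

fun alternating_prod :: "('g, 'm) monoid_scheme \<Rightarrow> bool \<Rightarrow> 'g list \<Rightarrow> 'g" where
  "alternating_prod G b [] = \<one>\<^bsub>G\<^esub>"
| "alternating_prod G b (x # xs) = signed G b x \<otimes>\<^bsub>G\<^esub> alternating_prod G (\<not> b) xs"

lemma alt_prod_eq_alternating_prod:
  "\<lbrakk>successively (\<lambda>i j. odd i \<noteq> odd j) is; is \<noteq> []\<rbrakk> \<Longrightarrow>
     alt_prod G c is = alternating_prod G (odd (hd is)) (map c is)"
proof (induction "is" rule: induct_list012)
  case (3 i j "is")
  then show ?case by (auto simp: alt_prod_def signed_def)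
qed (auto simp: alt_prod_def signed_def)

lemma successively_parity_upt: "successively (\<lambda>i j. odd i \<noteq> odd j) [m..<k]"
  by (induction k) (auto simp: successively_append_iff)

context group
begin

lemma signed_closed [simp]: "x \<in> carrier G \<Longrightarrow> signed G b x \<in> carrier G"
  by (simp add: signed_def)

lemma alternating_prod_closed [simp]:
  "set xs \<subseteq> carrier G \<Longrightarrow> alternating_prod G b xs \<in> carrier G"
  by (induction xs arbitrary: b) auto

lemma alternating_prod_append:
  "\<lbrakk>set xs \<subseteq> carrier G; set ys \<subseteq> carrier G\<rbrakk> \<Longrightarrow>
     alternating_prod G b (xs @ ys) =
       alternating_prod G b xs \<otimes> alternating_prod G (if even (length xs) then b else \<not> b) ys"
  by (induction xs arbitrary: b) (auto simp: m_assoc)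

lemma alternating_prod_snoc:
  "\<lbrakk>set xs \<subseteq> carrier G; x \<in> carrier G; even (length xs)\<rbrakk> \<Longrightarrow>
     alternating_prod G b (xs @ [x]) = alternating_prod G b xs \<otimes> signed G b x"
  by (simp add: alternating_prod_append)

end

locale medial_subset = group G for G (structure) +
  fixes K :: "'a set"
  assumes subset_carrier: "K \<subseteq> carrier G"
    and medial: "\<lbrakk>x \<in> K; y \<in> K; z \<in> K\<rbrakk> \<Longrightarrow> x \<otimes> inv y \<otimes> z = z \<otimes> inv y \<otimes> x"
begin

lemma medial_signed:
  assumes "x \<in> K" "y \<in> K" "z \<in> K"
  shows "signed G b x \<otimes> signed G (\<not> b) y \<otimes> signed G b z
       = signed G b z \<otimes> signed G (\<not> b) y \<otimes> signed G b x"
proof (cases b)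
  case True
  then show ?thesis using medial[OF assms] by (simp add: signed_def)
next
  case False
  have carr: "x \<in> carrier G" "y \<in> carrier G" "z \<in> carrier G"
    using assms subset_carrier by auto
  have "inv x \<otimes> y \<otimes> inv z = inv (z \<otimes> inv y \<otimes> x)"
    using carr by (simp add: inv_mult_group m_assoc)
  also have "\<dots> = inv (x \<otimes> inv y \<otimes> z)" using medial[OF assms] by simp
  also have "\<dots> = inv z \<otimes> y \<otimes> inv x"
    using carr by (simp add: inv_mult_group m_assoc)
  finally show ?thesis using False by (simp add: signed_def)
qed

lemma alternating_prod_rev:
  assumes "set xs \<subseteq> K" and "odd (length xs)"
  shows "alternating_prod G b xs = alternating_prod G b (rev xs)"
  using assms
proof (induction "length xs" arbitrary: xs b rule: less_induct)
  case less
  have K_carrier: "set ys \<subseteq> K \<Longrightarrow> set ys \<subseteq> carrier G" for ys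
    using subset_carrier by blast
  show ?case
  proof (cases "length xs = 1")
    case True
    then show ?thesis by (cases xs) auto
  next
    case False
    with less.prems obtain x1 x2 zs where "xs = x1 # x2 # zs" "zs \<noteq> []"
      by (cases xs; cases "tl xs") force+
    then obtain ys z where xs: "xs = x1 # x2 # ys @ [z]"
      by (metis rev_exhaust)
    have in_K: "x1 \<in> K" "x2 \<in> K" "z \<in> K" "set ys \<subseteq> K" and even_ys: "even (length ys)"
      using less.prems xs by auto
    have carr: "x1 \<in> carrier G" "x2 \<in> carrier G" "z \<in> carrier G" "set ys \<subseteq> carrier G"
      using in_K K_carrier subset_carrier by auto
    have pull_through: "signed G b' x \<otimes> alternating_prod G (\<not> b') ws
        = alternating_prod G b' (rev ws) \<otimes> signed G b' x"
      if "x \<in> K" "set ws \<subseteq> K" "length ws = length ys" for b' x ws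
    proof -
      have "signed G b' x \<otimes> alternating_prod G (\<not> b') ws = alternating_prod G b' (x # ws)"
        by simp
      also have "\<dots> = alternating_prod G b' (rev ws @ [x])"
        using less.hyps[of "x # ws"] that xs even_ys by auto
      also have "\<dots> = alternating_prod G b' (rev ws) \<otimes> signed G b' x"
        using that K_carrier subset_carrier even_ys
        by (intro alternating_prod_snoc) auto
      finally show ?thesis .
    qed
    have tail: "alternating_prod G b (ys @ [z])
        = signed G b z \<otimes> alternating_prod G (\<not> b) (rev ys)"
      using less.hyps[of "ys @ [z]"] in_K even_ys xs by auto
    have "alternating_prod G b xs
        = (signed G b x1 \<otimes> signed G (\<not> b) x2 \<otimes> signed G b z)
            \<otimes> alternating_prod G (\<not> b) (rev ys)"
      using xs tail carr by (simp add: m_assoc)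
    also have "\<dots> = signed G b z
        \<otimes> (signed G (\<not> b) x2 \<otimes> (signed G b x1 \<otimes> alternating_prod G (\<not> b) (rev ys)))"
      using medial_signed[OF in_K(1-3)] carr by (simp add: m_assoc)
    also have "\<dots> = signed G b z
        \<otimes> (signed G (\<not> b) x2 \<otimes> alternating_prod G b ys) \<otimes> signed G b x1"
      using pull_through[of x1 "rev ys" b] in_K carr by (simp add: m_assoc)
    also have "\<dots> = signed G b z
        \<otimes> (alternating_prod G (\<not> b) (rev ys) \<otimes> signed G (\<not> b) x2) \<otimes> signed G b x1"
      using pull_through[of x2 ys "\<not> b"] in_K by simp
    also have "\<dots> = alternating_prod G b (rev xs)"
      using xs carr even_ys by (simp add: alternating_prod_append m_assoc)
    finally show ?thesis .
  qed
qed

end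

lemma mg_class_eq_iff: "mg_class C u = mg_class C v \<longleftrightarrow> mg_eq C u v"
proof
  assume "mg_class C u = mg_class C v"
  then show "mg_eq C u v" by (metis mem_Collect_eq mg_class_def mg_refl)
next
  assume "mg_eq C u v"
  then show "mg_class C u = mg_class C v"
    by (auto simp: mg_class_def
        intro: mg_trans[OF mg_sym[OF \<open>mg_eq C u v\<close>]] mg_trans[OF \<open>mg_eq C u v\<close>])
qed

lemma mg_eq_append:
  assumes "mg_eq C u u'" and "mg_eq C v v'"
  shows "mg_eq C (u @ v) (u' @ v')"
proof -
  have "mg_eq C (u @ v) (u' @ v)" using mg_cong[OF assms(1), of "[]" v] by simp
  moreover have "mg_eq C (u' @ v) (u' @ v')" using mg_cong[OF assms(2), of u' "[]"] by simp
  ultimately show ?thesis by (rule mg_trans)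
qed

lemma mg_class_mult: "mg_class C u \<otimes>\<^bsub>medial_group C\<^esub> mg_class C v = mg_class C (u @ v)"
proof -
  have "mg_class C (u' @ v') = mg_class C (u @ v)"
    if "u' \<in> mg_class C u" "v' \<in> mg_class C v" for u' v'
  proof -
    have "mg_eq C u u'" "mg_eq C v v'" using that by (simp_all add: mg_class_def)
    then have "mg_eq C (u @ v) (u' @ v')" by (rule mg_eq_append)
    then show ?thesis by (simp add: mg_class_eq_iff[symmetric])
  qed
  moreover have "u \<in> mg_class C u" "v \<in> mg_class C v"
    by (simp_all add: mg_class_def mg_refl)
  ultimately have
    "(\<Union>u'\<in>mg_class C u. \<Union>v'\<in>mg_class C v. mg_class C (u' @ v')) = mg_class C (u @ v)"
    by (intro SUP_eq_const) blast+
  then show ?thesis by (simp add: medial_group_def)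
qed

lemma winv_Cons: "winv ((a, b) # w) = winv w @ [(a, \<not> b)]"
  by (simp add: winv_def)

lemma mg_eq_winv_cancel: "mg_eq C (winv w @ w) []"
proof (induction w)
  case Nil
  then show ?case by (simp add: winv_def mg_refl)
next
  case (Cons x w)
  obtain a b where x: "x = (a, b)" by force
  have "mg_eq C (winv w @ [(a, \<not> b), (a, b)] @ w) (winv w @ [] @ w)"
    using mg_cong[OF mg_free[of C a "\<not> b"], of "winv w" w] by simp
  then have "mg_eq C (winv (x # w) @ x # w) (winv w @ w)"
    unfolding x winv_Cons by simp
  then show ?case using Cons.IH by (rule mg_trans)
qed

lemma carrier_medial_group [simp]: "carrier (medial_group C) = range (mg_class C)"
  and one_medial_group [simp]: "\<one>\<^bsub>medial_group C\<^esub> = mg_class C []"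
  by (simp_all add: medial_group_def)

lemma group_medial_group: "group (medial_group C)"
proof (rule groupI)
  fix x y assume "x \<in> carrier (medial_group C)" "y \<in> carrier (medial_group C)"
  then show "x \<otimes>\<^bsub>medial_group C\<^esub> y \<in> carrier (medial_group C)"
    by (auto simp: mg_class_mult)
next
  fix x y z assume "x \<in> carrier (medial_group C)" "y \<in> carrier (medial_group C)"
    "z \<in> carrier (medial_group C)"
  then show "x \<otimes>\<^bsub>medial_group C\<^esub> y \<otimes>\<^bsub>medial_group C\<^esub> z
      = x \<otimes>\<^bsub>medial_group C\<^esub> (y \<otimes>\<^bsub>medial_group C\<^esub> z)"
    by (auto simp: mg_class_mult)
next
  fix x assume "x \<in> carrier (medial_group C)"
  then show "\<one>\<^bsub>medial_group C\<^esub> \<otimes>\<^bsub>medial_group C\<^esub> x = x"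
    by (auto simp: mg_class_mult)
next
  fix x assume "x \<in> carrier (medial_group C)"
  then obtain w where x: "x = mg_class C w" by auto
  have "mg_class C (winv w) \<otimes>\<^bsub>medial_group C\<^esub> x = \<one>\<^bsub>medial_group C\<^esub>"
    using mg_eq_winv_cancel[of C w] x by (simp add: mg_class_mult mg_class_eq_iff)
  then show "\<exists>y\<in>carrier (medial_group C). y \<otimes>\<^bsub>medial_group C\<^esub> x = \<one>\<^bsub>medial_group C\<^esub>"
    by auto
qed simp

lemma inv_mg_class: "inv\<^bsub>medial_group C\<^esub> (mg_class C w) = mg_class C (winv w)"
proof -
  interpret group "medial_group C" by (rule group_medial_group)
  have "mg_class C (winv w) \<otimes>\<^bsub>medial_group C\<^esub> mg_class C w = \<one>\<^bsub>medial_group C\<^esub>"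
    using mg_eq_winv_cancel[of C w] by (simp add: mg_class_mult mg_class_eq_iff)
  then show ?thesis by (intro inv_equality) auto
qed

definition arc_conjugates :: "('a \<times> 'a \<times> 'a) set \<Rightarrow> 'a word set set" where
  "arc_conjugates C = {mg_class C (wconj g x) | g x. True}"

lemma conj_arc_gen_in_arc_conjugates:
  assumes "g \<in> carrier (medial_group C)"
  shows "g \<otimes>\<^bsub>medial_group C\<^esub> arc_gen C x \<otimes>\<^bsub>medial_group C\<^esub> inv\<^bsub>medial_group C\<^esub> g
    \<in> arc_conjugates C"
proof -
  from assms obtain w where "g = mg_class C w" by auto
  then show ?thesis
    by (auto simp: arc_conjugates_def arc_gen_def inv_mg_class mg_class_mult wconj_def)
qed

lemma medial_subset_arc_conjugates: "medial_subset (medial_group C) (arc_conjugates C)"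
proof (intro medial_subset.intro medial_subset_axioms.intro group_medial_group)
  show "arc_conjugates C \<subseteq> carrier (medial_group C)"
    by (auto simp: arc_conjugates_def)
next
  fix x y z assume "x \<in> arc_conjugates C" "y \<in> arc_conjugates C" "z \<in> arc_conjugates C"
  then obtain g1 x1 g2 x2 g3 x3 where
    "x = mg_class C (wconj g1 x1)" "y = mg_class C (wconj g2 x2)" "z = mg_class C (wconj g3 x3)"
    by (auto simp: arc_conjugates_def)
  then show "x \<otimes>\<^bsub>medial_group C\<^esub> inv\<^bsub>medial_group C\<^esub> y \<otimes>\<^bsub>medial_group C\<^esub> z
      = z \<otimes>\<^bsub>medial_group C\<^esub> inv\<^bsub>medial_group C\<^esub> y \<otimes>\<^bsub>medial_group C\<^esub> x"
    using mg_medial[of C g1 x1 g2 x2 g3 x3]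
    by (simp add: inv_mg_class mg_class_mult mg_class_eq_iff)
qed

theorem lemma27:
  fixes C :: "('a::finite \<times> 'a \<times> 'a) set"
    and n :: nat
    and c :: "nat \<Rightarrow> 'a word set"
    and a :: "nat \<Rightarrow> 'a"
  assumes "odd n" and "n \<ge> 3"
    and "\<And>i. 1 \<le> i \<Longrightarrow> i \<le> n \<Longrightarrow>
           \<exists>g\<in>carrier (medial_group C).
             c i = g \<otimes>\<^bsub>medial_group C\<^esub> arc_gen C (a i)
                     \<otimes>\<^bsub>medial_group C\<^esub> inv\<^bsub>medial_group C\<^esub> g"
  shows "alt_prod (medial_group C) c [1..<n+1] = alt_prod (medial_group C) c (rev [1..<n+1])"
proof -
  interpret medial_subset "medial_group C" "arc_conjugates C"
    by (rule medial_subset_arc_conjugates)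
  have in_K: "set (map c [1..<n+1]) \<subseteq> arc_conjugates C"
    using assms(3) conj_arc_gen_in_arc_conjugates by fastforce
  have "alt_prod (medial_group C) c [1..<n+1]
      = alternating_prod (medial_group C) True (map c [1..<n+1])"
    using alt_prod_eq_alternating_prod[OF successively_parity_upt, of 1 "n+1"] assms(2)
    by (simp del: upt_Suc)
  also have "\<dots> = alternating_prod (medial_group C) True (rev (map c [1..<n+1]))"
    using alternating_prod_rev[OF in_K] assms(1) by (simp del: upt_Suc)
  also have "\<dots> = alt_prod (medial_group C) c (rev [1..<n+1])"
  proof -
    have "successively (\<lambda>i j. odd i \<noteq> odd j) (rev [1..<n+1])"
      unfolding successively_rev by (rule successively_mono[OF successively_parity_upt]) auto
    then show ?thesis
      using alt_prod_eq_alternating_prod[of "rev [1..<n+1]" "medial_group C" c, symmetric]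
        assms(1,2)
      by (simp del: upt_Suc add: rev_map hd_rev)
  qed
  finally show ?thesis .
qed

end
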